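(* Let $G$ be a finite group, let $N$ be a non-trivial normal subgroup of $G$ which is a $p$-group for a prime $p$, and let $x,y\in G$. If $C_N(x)=1$, then there exists $n\in N$ such that $p$ divides the order of $\langle x,yn\rangle$. *)

theory Defs
  imports "HOL-Algebra.Algebra"
begin

definition centralizer_in :: "('a, 'b) monoid_scheme \<Rightarrow> 'a set \<Rightarrow> 'a \<Rightarrow> 'a set" where
  "centralizer_in G N x = {n \<in> N. n \<otimes>\<^bsub>G\<^esub> x = x \<otimes>\<^bsub>G\<^esub> n}"

end

theory Submission
  imports Defs
begin

(* Let A be the centre of N: an abelian normal subgroup of G, nontrivial because N is a
   nontrivial p-group, on which x acts without nontrivial fixed points.  Pick z \<noteq> 1 in A and
   suppose p divides neither |Q| for Q = <x, y> nor |H| for H = <x, y z>.  Then H \<inter> A = 1 and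
   Q \<subseteq> A H, so every g \<in> Q has a unique D g \<in> A with g (D g) \<in> H; D is a crossed homomorphism
   with D x = 1 and D y = z.  The product e of all D g satisfies e = h\<inverse> e h (D h)^|Q| for h \<in> Q:
   for h = x this says that e commutes with x, so e = 1, and then h = y gives z^|Q| = 1, whence
   z = 1 because |Q| is prime to p. *)

lemma (in group) mult_inv_cancel_left [simp]:
  "x \<in> carrier G \<Longrightarrow> y \<in> carrier G \<Longrightarrow> x \<otimes> (inv x \<otimes> y) = y"
  by (simp add: m_assoc[symmetric])

lemma (in group) inv_mult_cancel_left [simp]:
  "x \<in> carrier G \<Longrightarrow> y \<in> carrier G \<Longrightarrow> inv x \<otimes> (x \<otimes> y) = y"
  by (simp add: m_assoc[symmetric])

lemma (in group) inv_commute: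
  assumes "a \<in> carrier G" and "b \<in> carrier G" and "a \<otimes> b = b \<otimes> a"
  shows "inv a \<otimes> b = b \<otimes> inv a"
proof -
  have "inv a \<otimes> b = inv a \<otimes> (b \<otimes> a) \<otimes> inv a"
    using assms(1,2) by (simp add: m_assoc)
  also have "\<dots> = inv a \<otimes> (a \<otimes> b) \<otimes> inv a"
    using assms(3) by simp
  also have "\<dots> = b \<otimes> inv a"
    using assms(1,2) by (simp add: m_assoc[symmetric])
  finally show ?thesis .
qed

lemma coprime_of_dvd_prime_power:
  fixes p :: nat
  assumes "Factorial_Ring.prime p" and "\<not> p dvd m" and "d dvd p ^ k"
  shows "coprime m d"
proof -
  have "coprime m (p ^ k)"
    using prime_imp_coprime[OF assms(1,2)] by (simp add: coprime_commute)
  then show ?thesis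
    by (rule coprime_divisors[OF dvd_refl assms(3)])
qed

lemma (in group) card_subgroup_dvd:
  assumes "subgroup H G" and "subgroup K G" and "K \<subseteq> H"
  shows "card K dvd card H"
proof -
  have "subgroup K (G\<lparr>carrier := H\<rparr>)"
    using subgroup_incl[OF assms(2,1,3)] .
  then have "card (rcosets\<^bsub>G\<lparr>carrier := H\<rparr>\<^esub> K) * card K = card H"
    using group.lagrange[OF subgroup_imp_group[OF assms(1)]] by (simp add: order_def)
  then show ?thesis
    by (metis dvd_triv_right)
qed

lemma (in group) coprime_subgroups_inter:
  assumes "subgroup H G" and "subgroup K G" and "coprime (card H) (card K)"
  shows "H \<inter> K = {\<one>}"
proof -
  have HK: "subgroup (H \<inter> K) G"
    using subgroups_Inter_pair[OF assms(1,2)] .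
  have "card (H \<inter> K) dvd card H" and "card (H \<inter> K) dvd card K"
    using card_subgroup_dvd[OF _ HK] assms(1,2) by auto
  then have "card (H \<inter> K) = 1"
    using assms(3) by (metis coprime_common_divisor_nat)
  then obtain a where "H \<inter> K = {a}"
    by (rule card_1_singletonE)
  moreover have "\<one> \<in> H \<inter> K"
    using subgroup.one_closed[OF HK] .
  ultimately show ?thesis
    by simp
qed

lemma (in group) eq_one_of_coprime_pow:
  assumes "subgroup H G" and "a \<in> H" and "a [^] m = \<one>" and "coprime m (card H)"
  shows "a = \<one>"
proof -
  have a: "a \<in> carrier G"
    using subgroup.mem_carrier[OF assms(1,2)] .
  have "a [^] card H = \<one>"
    using group.pow_order_eq_1[OF subgroup_imp_group[OF assms(1)]] assms(2)
    by (simp add: order_def flip: nat_pow_consistent)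
  then have "ord a dvd card H" and "ord a dvd m"
    using assms(3) pow_eq_id[OF a] by auto
  then have "ord a = 1"
    using assms(4) by (metis coprime_common_divisor_nat)
  then show ?thesis
    using ord_eq_1[OF a] by simp
qed

lemma (in group_action) card_fixed_points_mod:
  fixes p :: nat
  assumes "finite E" and "Factorial_Ring.prime p" and "order G = p ^ k"
  shows "card {x \<in> E. \<forall>g \<in> carrier G. \<phi> g x = x} mod p = card E mod p"
proof -
  define F where "F = {x \<in> E. \<forall>g \<in> carrier G. \<phi> g x = x}"
  define S where "S = {orb \<in> orbits G E \<phi>. card orb = 1}"
  have "S = (\<lambda>x. {x}) ` F"
  proof
    show "S \<subseteq> (\<lambda>x. {x}) ` F"
    proof
      fix orb assume "orb \<in> S"
      then obtain x where x: "x \<in> E" and orb_eq: "orb = orbit G \<phi> x" and "card orb = 1"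
        by (auto simp: S_def orbits_def)
      then have "orb = {x}"
        using orbit_refl[OF x] by (auto simp: card_1_singleton_iff)
      then have "x \<in> F"
        using x orb_eq by (auto simp: F_def orbit_def)
      then show "orb \<in> (\<lambda>x. {x}) ` F"
        using \<open>orb = {x}\<close> by blast
    qed
    show "(\<lambda>x. {x}) ` F \<subseteq> S"
    proof
      fix orb assume "orb \<in> (\<lambda>x. {x}) ` F"
      then obtain x where x: "x \<in> F" and orb_eq: "orb = {x}"
        by blast
      have "orbit G \<phi> x = {x}"
        using x orbit_refl by (auto simp: F_def orbit_def)
      then show "orb \<in> S"
        using x orb_eq by (auto simp: S_def orbits_def F_def)
    qed
  qed
  then have card_S: "card S = card F"
    by (simp add: card_image)
  have fin_orbits: "finite (orbits G E \<phi>)"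
    using assms(1) by (simp add: orbits_def)
  have "p dvd card orb" if orb_in: "orb \<in> orbits G E \<phi> - S" for orb
  proof -
    obtain x where x: "x \<in> E" and orb_eq: "orb = orbit G \<phi> x" and "card orb \<noteq> 1"
      using orb_in unfolding S_def orbits_def by blast
    have "card orb dvd p ^ k"
      using orbit_stabilizer_theorem[OF x] assms(3) orb_eq by (metis dvd_triv_left)
    then obtain i where i: "card orb = p ^ i"
      using divides_primepow_nat[OF assms(2)] by blast
    with \<open>card orb \<noteq> 1\<close> have "i \<noteq> 0"
      by auto
    with i show ?thesis
      by (simp add: dvd_power)
  qed
  then have "p dvd (\<Sum>orb \<in> orbits G E \<phi> - S. card orb)"
    by (rule dvd_sum)
  moreover have "card E = (\<Sum>orb \<in> orbits G E \<phi>. card orb)"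
    using disjoint_sum[OF assms(1), of "\<lambda>_. 1 :: nat"] by simp
  moreover have "(\<Sum>orb \<in> orbits G E \<phi>. card orb)
      = (\<Sum>orb \<in> orbits G E \<phi> - S. card orb) + (\<Sum>orb \<in> S. card orb)"
    by (rule sum.subset_diff) (auto simp: S_def fin_orbits)
  moreover have "(\<Sum>orb \<in> S. card orb) = card F"
    using card_S by (simp add: S_def)
  ultimately show ?thesis
    unfolding F_def by (metis mod_add_left_eq dvd_imp_mod_0 add_0)
qed

definition center_in :: "('a, 'b) monoid_scheme \<Rightarrow> 'a set \<Rightarrow> 'a set" where
  "center_in G N = {z \<in> N. \<forall>n \<in> N. z \<otimes>\<^bsub>G\<^esub> n = n \<otimes>\<^bsub>G\<^esub> z}"

lemma center_inI:
  "z \<in> N \<Longrightarrow> (\<And>n. n \<in> N \<Longrightarrow> z \<otimes>\<^bsub>G\<^esub> n = n \<otimes>\<^bsub>G\<^esub> z) \<Longrightarrow> z \<in> center_in G N"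
  by (simp add: center_in_def)

lemma center_inD:
  "z \<in> center_in G N \<Longrightarrow> n \<in> N \<Longrightarrow> z \<otimes>\<^bsub>G\<^esub> n = n \<otimes>\<^bsub>G\<^esub> z"
  by (simp add: center_in_def)

lemma center_in_subset: "center_in G N \<subseteq> N"
  by (auto simp: center_in_def)

lemma (in group) subgroup_center_in:
  assumes N: "subgroup N G"
  shows "subgroup (center_in G N) G"
proof (rule subgroupI)
  show "center_in G N \<subseteq> carrier G"
    unfolding center_in_def using subgroup.subset[OF N] by blast
  have "\<one> \<in> center_in G N"
    using subgroup.one_closed[OF N] subgroup.mem_carrier[OF N] by (auto intro: center_inI)
  then show "center_in G N \<noteq> {}"
    by blast
next
  fix a assume a: "a \<in> center_in G N"
  then have aN: "a \<in> N" and aG: "a \<in> carrier G"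
    using center_in_subset[of G N] subgroup.mem_carrier[OF N] by blast+
  show "inv a \<in> center_in G N"
  proof (rule center_inI)
    show "inv a \<in> N"
      using subgroup.m_inv_closed[OF N aN] .
    fix n assume "n \<in> N"
    then show "inv a \<otimes> n = n \<otimes> inv a"
      using inv_commute[OF aG _ center_inD[OF a]] subgroup.mem_carrier[OF N] by blast
  qed
next
  fix a b assume a: "a \<in> center_in G N" and b: "b \<in> center_in G N"
  then have aN: "a \<in> N" and bN: "b \<in> N" and aG: "a \<in> carrier G" and bG: "b \<in> carrier G"
    using center_in_subset[of G N] subgroup.mem_carrier[OF N] by blast+
  show "a \<otimes> b \<in> center_in G N"
  proof (rule center_inI)
    show "a \<otimes> b \<in> N"
      using subgroup.m_closed[OF N aN bN] .
    fix n assume n: "n \<in> N"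
    then have nG: "n \<in> carrier G"
      using subgroup.mem_carrier[OF N] by blast
    have "a \<otimes> b \<otimes> n = a \<otimes> (n \<otimes> b)"
      using aG bG nG center_inD[OF b n] by (simp add: m_assoc)
    also have "\<dots> = n \<otimes> (a \<otimes> b)"
      using aG bG nG center_inD[OF a n] by (simp add: m_assoc[symmetric])
    finally show "a \<otimes> b \<otimes> n = n \<otimes> (a \<otimes> b)" .
  qed
qed

lemma (in group) normal_center_in:
  assumes "N \<lhd> G"
  shows "center_in G N \<lhd> G"
proof -
  interpret N: normal N G by (rule assms)
  have "g \<otimes> z \<otimes> inv g \<in> center_in G N" if g: "g \<in> carrier G" and z: "z \<in> center_in G N" for g z
  proof (rule center_inI)
    have zN: "z \<in> N" and zG: "z \<in> carrier G"
      using z center_in_subset[of G N] N.mem_carrier by blast+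
    show "g \<otimes> z \<otimes> inv g \<in> N"
      using N.inv_op_closed2[OF g zN] .
    fix n assume n: "n \<in> N"
    define m where "m = inv g \<otimes> n \<otimes> g"
    have m: "m \<in> N"
      unfolding m_def using N.inv_op_closed1[OF g n] .
    have nG: "n \<in> carrier G"
      using n N.mem_carrier by blast
    have "g \<otimes> z \<otimes> inv g \<otimes> n = g \<otimes> (z \<otimes> m) \<otimes> inv g"
      using g zG nG by (simp add: m_def m_assoc)
    also have "\<dots> = g \<otimes> (m \<otimes> z) \<otimes> inv g"
      by (simp only: center_inD[OF z m])
    also have "\<dots> = n \<otimes> (g \<otimes> z \<otimes> inv g)"
      using g zG nG by (simp add: m_def m_assoc[symmetric])
    finally show "g \<otimes> z \<otimes> inv g \<otimes> n = n \<otimes> (g \<otimes> z \<otimes> inv g)" .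
  qed
  then show ?thesis
    using normal_inv_iff subgroup_center_in[OF N.subgroup_axioms] by blast
qed

lemma (in group) center_in_nontrivial:
  fixes p :: nat
  assumes N: "subgroup N G" and p: "Factorial_Ring.prime p"
    and card_N: "card N = p ^ k" and nontrivial: "N \<noteq> {\<one>}"
  shows "center_in G N \<noteq> {\<one>}"
proof -
  define K where "K = G\<lparr>carrier := N\<rparr>"
  have K: "group K"
    unfolding K_def using subgroup_imp_group[OF N] .
  define \<phi> where "\<phi> = (\<lambda>g. \<lambda>h \<in> carrier K. g \<otimes>\<^bsub>K\<^esub> h \<otimes>\<^bsub>K\<^esub> inv\<^bsub>K\<^esub> g)"
  have act: "group_action K N \<phi>"
    using group.action_by_conjugation[OF K] by (simp add: \<phi>_def K_def)
  have conj_fixed: "\<phi> g h = h \<longleftrightarrow> h \<otimes> g = g \<otimes> h" if "g \<in> N" and "h \<in> N" for g h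
    using that subgroup.mem_carrier[OF N] by (auto simp: \<phi>_def K_def N inv_solve_right')
  have fixed: "{h \<in> N. \<forall>g \<in> carrier K. \<phi> g h = h} = center_in G N"
    using conj_fixed by (auto simp: K_def center_in_def)
  have "finite N"
    using card_N prime_gt_0_nat[OF p] by (intro card_ge_0_finite) simp
  have "k \<noteq> 0"
    using card_N nontrivial subgroup.one_closed[OF N] by (auto simp: card_1_singleton_iff)
  have "card (center_in G N) mod p = card N mod p"
    using group_action.card_fixed_points_mod[OF act \<open>finite N\<close> p, of k] card_N
    unfolding fixed by (simp add: K_def order_def)
  also have "\<dots> = 0"
    using card_N \<open>k \<noteq> 0\<close> by simp
  finally have "p dvd card (center_in G N)"
    by (rule mod_0_imp_dvd)
  then show ?thesis
    using p by auto
qed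

lemma hom_finprod:
  assumes "comm_group C" and "comm_group D" and "h \<in> hom C D" and "f \<in> S \<rightarrow> carrier C"
  shows "h (finprod C f S) = finprod D (\<lambda>i. h (f i)) S"
proof -
  interpret C: comm_group C by (rule assms(1))
  interpret D: comm_group D by (rule assms(2))
  interpret h: group_hom C D h
    by (simp add: group_hom_def group_hom_axioms_def assms(3) C.group_axioms D.group_axioms)
  show ?thesis
    using assms(4)
    by (induction S rule: infinite_finite_induct) (simp_all add: C.finprod_insert D.finprod_insert Pi_def)
qed

(* The averaged element is the product of all D g. *)
lemma (in group) crossed_hom_average:
  assumes A: "A \<lhd> G" and comm: "\<And>a b. a \<in> A \<Longrightarrow> b \<in> A \<Longrightarrow> a \<otimes> b = b \<otimes> a"
    and Q: "subgroup Q G" and D: "D \<in> Q \<rightarrow> A"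
    and crossed: "\<And>g h. g \<in> Q \<Longrightarrow> h \<in> Q \<Longrightarrow> D (g \<otimes> h) = inv h \<otimes> D g \<otimes> h \<otimes> D h"
  shows "\<exists>e \<in> A. \<forall>h \<in> Q. e = inv h \<otimes> e \<otimes> h \<otimes> D h [^] card Q"
proof
  interpret A: normal A G by (rule A)
  define C where "C = G\<lparr>carrier := A\<rparr>"
  have C: "comm_group C"
    unfolding C_def using group.group_comm_groupI[OF subgroup_imp_group[OF A.subgroup_axioms]] comm
    by simp
  interpret C: comm_group C by (rule C)
  have carrier_C: "carrier C = A" and mult_C: "\<And>a b. a \<otimes>\<^bsub>C\<^esub> b = a \<otimes> b"
    by (simp_all add: C_def)
  have pow_C: "\<And>a n. a [^]\<^bsub>C\<^esub> (n :: nat) = a [^] n"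
    unfolding C_def by (rule nat_pow_consistent[symmetric])
  define e where "e = finprod C D Q"
  show "e \<in> A"
    unfolding e_def using C.finprod_closed D carrier_C by simp
  show "\<forall>h \<in> Q. e = inv h \<otimes> e \<otimes> h \<otimes> D h [^] card Q"
  proof
    fix h assume h: "h \<in> Q"
    have hG: "h \<in> carrier G"
      using h subgroup.mem_carrier[OF Q] by blast
    have QG: "\<And>g. g \<in> Q \<Longrightarrow> g \<in> carrier G"
      using subgroup.mem_carrier[OF Q] by blast
    have AG: "\<And>a. a \<in> A \<Longrightarrow> a \<in> carrier G"
      using A.mem_carrier by blast
    have conj_hom: "(\<lambda>a. inv h \<otimes> a \<otimes> h) \<in> hom C C"
      using A.inv_op_closed1[OF hG] AG hG by (auto simp: hom_def carrier_C mult_C m_assoc)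
    have shift: "(\<lambda>g. g \<otimes> h) ` Q = Q"
      using subgroup.rcos_const[OF Q is_group h] by (simp add: r_coset_def UNION_singleton_eq_range)
    have "e = finprod C (\<lambda>g. D (g \<otimes> h)) Q"
      unfolding e_def
      by (subst shift[symmetric], rule C.finprod_reindex)
         (use D carrier_C shift hG QG in \<open>auto simp: inj_on_def\<close>)
    also have "\<dots> = finprod C (\<lambda>g. (inv h \<otimes> D g \<otimes> h) \<otimes>\<^bsub>C\<^esub> D h) Q"
      using D h A.inv_op_closed1[OF hG] by (intro C.finprod_cong') (auto simp: carrier_C mult_C crossed)
    also have "\<dots> = finprod C (\<lambda>g. inv h \<otimes> D g \<otimes> h) Q \<otimes>\<^bsub>C\<^esub> finprod C (\<lambda>g. D h) Q"
      using D h A.inv_op_closed1[OF hG] by (intro C.finprod_multf) (auto simp: carrier_C)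
    also have "finprod C (\<lambda>g. inv h \<otimes> D g \<otimes> h) Q = inv h \<otimes> e \<otimes> h"
      unfolding e_def using hom_finprod[OF C C conj_hom, of D Q] D carrier_C by simp
    also have "finprod C (\<lambda>g. D h) Q = D h [^] card Q"
      using C.finprod_const[of "D h" Q] D h by (auto simp: carrier_C pow_C)
    finally show "e = inv h \<otimes> e \<otimes> h \<otimes> D h [^] card Q"
      by (simp only: mult_C)
  qed
qed

(* For g \<in> A <#> H with H \<inter> A = {\<one>} this is the unique c \<in> A with g \<otimes> c \<in> H; elsewhere THE
   gives an unspecified value. *)
definition complement_cocycle :: "('a, 'b) monoid_scheme \<Rightarrow> 'a set \<Rightarrow> 'a set \<Rightarrow> 'a \<Rightarrow> 'a" where
  "complement_cocycle G A H g = (THE c. c \<in> A \<and> g \<otimes>\<^bsub>G\<^esub> c \<in> H)"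

lemma (in group) complement_cocycle_eq:
  assumes A: "subgroup A G" and H: "subgroup H G" and HA: "H \<inter> A = {\<one>}"
    and g: "g \<in> carrier G" and c: "c \<in> A" and gc: "g \<otimes> c \<in> H"
  shows "complement_cocycle G A H g = c"
  unfolding complement_cocycle_def
proof (rule the_equality)
  show "c \<in> A \<and> g \<otimes> c \<in> H"
    using c gc by blast
  fix c' assume c': "c' \<in> A \<and> g \<otimes> c' \<in> H"
  interpret A: subgroup A G by (rule A)
  have cG: "c \<in> carrier G" and c'G: "c' \<in> carrier G"
    using c c' A.mem_carrier by blast+
  have "inv c \<otimes> c' = inv (g \<otimes> c) \<otimes> (g \<otimes> c')"
    using g cG c'G by (simp add: inv_mult_group m_assoc)
  then have "inv c \<otimes> c' \<in> H"
    using gc c' subgroup.m_closed[OF H] subgroup.m_inv_closed[OF H] by simp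
  moreover have "inv c \<otimes> c' \<in> A"
    using c c' by blast
  ultimately have "inv c \<otimes> c' = \<one>"
    using HA by blast
  then show "c' = c"
    using cG c'G by (simp add: inv_solve_left')
qed

lemma (in group) complement_cocycle_mem:
  assumes A: "A \<lhd> G" and H: "subgroup H G" and HA: "H \<inter> A = {\<one>}" and g: "g \<in> A <#> H"
  shows "complement_cocycle G A H g \<in> A" and "g \<otimes> complement_cocycle G A H g \<in> H"
proof -
  interpret A: normal A G by (rule A)
  obtain a k where a: "a \<in> A" and k: "k \<in> H" and g_eq: "g = a \<otimes> k"
    using g unfolding set_mult_def by blast
  have aG: "a \<in> carrier G" and kG: "k \<in> carrier G"
    using a k A.mem_carrier subgroup.mem_carrier[OF H] by blast+
  have c: "inv k \<otimes> inv a \<otimes> k \<in> A"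
    using A.inv_op_closed1[OF kG] a by blast
  have "g \<otimes> (inv k \<otimes> inv a \<otimes> k) = k"
    using aG kG by (simp add: g_eq m_assoc)
  then have "complement_cocycle G A H g = inv k \<otimes> inv a \<otimes> k"
    using complement_cocycle_eq[OF A.subgroup_axioms H HA _ c] k aG kG g_eq by simp
  then show "complement_cocycle G A H g \<in> A" and "g \<otimes> complement_cocycle G A H g \<in> H"
    using c k \<open>g \<otimes> (inv k \<otimes> inv a \<otimes> k) = k\<close> by simp_all
qed

lemma (in group) complement_cocycle_mult:
  assumes A: "A \<lhd> G" and H: "subgroup H G" and HA: "H \<inter> A = {\<one>}"
    and g: "g \<in> A <#> H" and h: "h \<in> A <#> H"
  shows "complement_cocycle G A H (g \<otimes> h)
    = inv h \<otimes> complement_cocycle G A H g \<otimes> h \<otimes> complement_cocycle G A H h"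
proof -
  interpret A: normal A G by (rule A)
  define D where "D = complement_cocycle G A H"
  have Dg: "D g \<in> A" "g \<otimes> D g \<in> H" and Dh: "D h \<in> A" "h \<otimes> D h \<in> H"
    unfolding D_def using complement_cocycle_mem[OF A H HA] g h by blast+
  have gG: "g \<in> carrier G" and hG: "h \<in> carrier G"
    using g h subgroup.subset[OF mult_norm_subgroup[OF A H]] by blast+
  have DgG: "D g \<in> carrier G" and DhG: "D h \<in> carrier G"
    using Dg Dh A.mem_carrier by blast+
  have "inv h \<otimes> D g \<otimes> h \<otimes> D h \<in> A"
    using A.inv_op_closed1[OF hG Dg(1)] Dh(1) by blast
  moreover have "g \<otimes> h \<otimes> (inv h \<otimes> D g \<otimes> h \<otimes> D h) = (g \<otimes> D g) \<otimes> (h \<otimes> D h)"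
    using gG hG DgG DhG by (simp add: m_assoc)
  then have "g \<otimes> h \<otimes> (inv h \<otimes> D g \<otimes> h \<otimes> D h) \<in> H"
    using Dg(2) Dh(2) subgroup.m_closed[OF H] by simp
  ultimately show ?thesis
    unfolding D_def by (rule complement_cocycle_eq[OF A.subgroup_axioms H HA m_closed[OF gG hG]])
qed

lemma (in group) coprime_generate_twist_eq_one:
  assumes A: "A \<lhd> G" and comm: "\<And>a b. a \<in> A \<Longrightarrow> b \<in> A \<Longrightarrow> a \<otimes> b = b \<otimes> a"
    and x: "x \<in> carrier G" and y: "y \<in> carrier G" and z: "z \<in> A"
    and fixed_free: "\<And>a. a \<in> A \<Longrightarrow> a \<otimes> x = x \<otimes> a \<Longrightarrow> a = \<one>"
    and coprime_Q: "coprime (card (generate G {x, y})) (card A)"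
    and coprime_H: "coprime (card (generate G {x, y \<otimes> z})) (card A)"
  shows "z = \<one>"
proof -
  interpret A: normal A G by (rule A)
  define Q where "Q = generate G {x, y}"
  define H where "H = generate G {x, y \<otimes> z}"
  have zG: "z \<in> carrier G"
    using z A.mem_carrier by blast
  have Q: "subgroup Q G" and H: "subgroup H G"
    unfolding Q_def H_def using x y zG by (auto intro: generate_is_subgroup)
  have HA: "H \<inter> A = {\<one>}"
    using coprime_subgroups_inter[OF H A.subgroup_axioms] coprime_H by (simp add: H_def)
  have "x \<in> A <#> H"
  proof -
    have "\<one> \<otimes> x \<in> A <#> H"
      using A.one_closed generate.incl[of x "{x, y \<otimes> z}" G] unfolding set_mult_def H_def by blast
    then show ?thesis using x by simp
  qed
  moreover have "y \<in> A <#> H"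
  proof -
    have "(y \<otimes> inv z \<otimes> inv y) \<otimes> (y \<otimes> z) \<in> A <#> H"
      using A.inv_op_closed2[OF y A.m_inv_closed[OF z]] generate.incl[of "y \<otimes> z" "{x, y \<otimes> z}" G]
      unfolding set_mult_def H_def by blast
    then show ?thesis using y zG by (simp add: m_assoc)
  qed
  ultimately have QAH: "Q \<subseteq> A <#> H"
    unfolding Q_def by (intro generate_subgroup_incl mult_norm_subgroup[OF A H]) auto
  define D where "D = complement_cocycle G A H"
  have D: "D \<in> Q \<rightarrow> A"
    unfolding D_def using complement_cocycle_mem(1)[OF A H HA] QAH by blast
  have crossed: "D (g \<otimes> h) = inv h \<otimes> D g \<otimes> h \<otimes> D h" if "g \<in> Q" and "h \<in> Q" for g h
    unfolding D_def by (rule complement_cocycle_mult[OF A H HA]) (use that QAH in blast)+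
  obtain e where e: "e \<in> A" and avg: "\<And>h. h \<in> Q \<Longrightarrow> e = inv h \<otimes> e \<otimes> h \<otimes> D h [^] card Q"
    using crossed_hom_average[OF A comm Q D crossed] by blast
  have x_in: "x \<in> Q" and y_in: "y \<in> Q"
    unfolding Q_def by (auto intro: generate.incl)
  have "D x = \<one>"
    unfolding D_def using complement_cocycle_eq[OF A.subgroup_axioms H HA x A.one_closed] generate.incl[of x _ G]
    by (simp add: x H_def)
  have "D y = z"
    unfolding D_def using complement_cocycle_eq[OF A.subgroup_axioms H HA y z] generate.incl[of "y \<otimes> z" _ G]
    by (simp add: H_def)
  have eG: "e \<in> carrier G"
    using e A.mem_carrier by blast
  have "e = inv x \<otimes> (e \<otimes> x)"
    using avg[OF x_in] \<open>D x = \<one>\<close> x eG by (simp add: m_assoc)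
  then have "e \<otimes> x = x \<otimes> e"
    using x eG by (simp add: inv_solve_left)
  then have "e = \<one>"
    using fixed_free e by blast
  then have "z [^] card Q = \<one>"
    using avg[OF y_in] \<open>D y = z\<close> y zG by simp
  then show "z = \<one>"
    using eq_one_of_coprime_pow[OF A.subgroup_axioms z] coprime_Q by (simp add: Q_def)
qed

theorem lemma2p4:
  fixes G (structure) and N :: "'a set" and p :: nat and x y :: 'a
  assumes "group G" and "finite (carrier G)"
    and "N \<lhd> G" and "N \<noteq> {\<one>}"
    and "Factorial_Ring.prime p" and "\<exists>k. card N = p ^ k"
    and "x \<in> carrier G" and "y \<in> carrier G"
    and "centralizer_in G N x = {\<one>}"
  shows "\<exists>n \<in> N. p dvd card (generate G {x, y \<otimes> n})"
proof -
  interpret group G by (rule assms(1))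
  have N: "subgroup N G"
    using normal_imp_subgroup[OF assms(3)] .
  obtain k where card_N: "card N = p ^ k"
    using assms(6) by blast
  define A where "A = center_in G N"
  have A: "A \<lhd> G" and A_sub: "A \<subseteq> N"
    unfolding A_def using normal_center_in[OF assms(3)] center_in_subset[of G N] by blast+
  have comm: "\<And>a b. a \<in> A \<Longrightarrow> b \<in> A \<Longrightarrow> a \<otimes> b = b \<otimes> a"
    unfolding A_def using center_inD[of _ G N] center_in_subset[of G N] by blast
  have fixed_free: "\<And>a. a \<in> A \<Longrightarrow> a \<otimes> x = x \<otimes> a \<Longrightarrow> a = \<one>"
    using assms(9) A_sub unfolding centralizer_in_def by blast
  have coprime_A: "coprime m (card A)" if "\<not> p dvd m" for m
    using coprime_of_dvd_prime_power[OF assms(5) that] card_N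
      card_subgroup_dvd[OF N normal_imp_subgroup[OF A] A_sub] by simp
  have "A \<noteq> {\<one>}" and "\<one> \<in> A"
    unfolding A_def using center_in_nontrivial[OF N assms(5) card_N assms(4)]
      subgroup.one_closed[OF subgroup_center_in[OF N]] by blast+
  then obtain z where z: "z \<in> A" "z \<noteq> \<one>"
    by blast
  show ?thesis
  proof (cases "p dvd card (generate G {x, y})")
    case True
    then show ?thesis
      using subgroup.one_closed[OF N] assms(8) by (intro bexI[of _ \<one>]) simp_all
  next
    case False
    then have "p dvd card (generate G {x, y \<otimes> z})"
      using coprime_generate_twist_eq_one[OF A comm assms(7,8) z(1) fixed_free] coprime_A z(2)
      by blast
    with z(1) A_sub show ?thesis
      by blast
  qed
qed

end
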